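(* Let $R$ be a commutative ring. Then $R$ is $\pi$-regular if and only if $R$ is feckly clean and every prime ideal of $R$ is maximal.
   Context: Rings have identity; $J(R)$ is the Jacobson radical. A ring $R$ is $\pi$-regular if for every $a\in R$ there is $n\in\mathbb{N}$ with $a^n\in a^nRa^n$. An element $u\in R$ is full if $RuR=R$. An element $a\in R$ is feckly clean if there exist $e\in R$ and a full element $u\in R$ with $a=e+u$ and $eR(1-e)\subseteq J(R)$; $R$ is feckly clean if every element is feckly clean. *)

theory Defs
  imports "HOL-Algebra.Algebra"
begin

text \<open>Jacobson radical: intersection of all maximal ideals (intersected with the carrier,
  so that it is the whole ring when there are no maximal ideals, i.e. the zero ring).\<close>
definition jacobson_radical :: "('a, 'b) ring_scheme \<Rightarrow> 'a set" where
  "jacobson_radical R = carrier R \<inter> \<Inter>{I. maximalideal I R}"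

definition pi_regular :: "('a, 'b) ring_scheme \<Rightarrow> bool" where
  "pi_regular R \<longleftrightarrow> (\<forall>a \<in> carrier R. \<exists>n::nat. n \<ge> 1 \<and>
      (\<exists>r \<in> carrier R. a [^]\<^bsub>R\<^esub> n = (a [^]\<^bsub>R\<^esub> n) \<otimes>\<^bsub>R\<^esub> r \<otimes>\<^bsub>R\<^esub> (a [^]\<^bsub>R\<^esub> n)))"

text \<open>u is full if RuR = R, i.e. the two-sided ideal generated by u is the whole ring.\<close>
definition full_elem :: "('a, 'b) ring_scheme \<Rightarrow> 'a \<Rightarrow> bool" where
  "full_elem R u \<longleftrightarrow> u \<in> carrier R \<and> genideal R {u} = carrier R"

definition feckly_clean_elem :: "('a, 'b) ring_scheme \<Rightarrow> 'a \<Rightarrow> bool" where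
  "feckly_clean_elem R a \<longleftrightarrow> (\<exists>e \<in> carrier R. \<exists>u \<in> carrier R.
      full_elem R u \<and> a = e \<oplus>\<^bsub>R\<^esub> u \<and>
      (\<forall>r \<in> carrier R. e \<otimes>\<^bsub>R\<^esub> r \<otimes>\<^bsub>R\<^esub> (\<one>\<^bsub>R\<^esub> \<ominus>\<^bsub>R\<^esub> e) \<in> jacobson_radical R))"

definition feckly_clean :: "('a, 'b) ring_scheme \<Rightarrow> bool" where
  "feckly_clean R \<longleftrightarrow> (\<forall>a \<in> carrier R. feckly_clean_elem R a)"

end

theory Submission
  imports Defs
begin

(* Fix a with a^n = a^n r a^n and put f = a^n r, an idempotent
   with f a^n = a^n, and e = 1 - f.  Since R is commutative, e R (1 - e) = e f R = 0
   lies in J(R).  The element u = a - e lies in no prime ideal P: as e f = 0, one of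
   e, f lies in P, and membership of a, a^n, f and (given u in P) of e are all
   equivalent, so 1 = e + f would lie in P.  Hence u is full.  Moreover, modulo a
   prime P with a not in P we get 1 - r a^n in P, so every ideal properly containing
   P contains 1: primes are maximal.

   Backward direction.  For a in R the set
   S = {a^n (1 - a x)} is multiplicatively closed.  If 0 is in S, then
   a^n = a^(n+1) x and a^(n+1) = a^(n+1) x^(n+1) a^(n+1).  Otherwise a prime ideal P
   avoids S (Zorn's lemma); P is maximal and a is not in P, so 1 - a x lies in P for
   some x, contradicting P disjoint from S. *)

context ideal
begin

lemma add_mem: "x \<in> I \<Longrightarrow> y \<in> I \<Longrightarrow> x \<oplus> y \<in> I"
  by (rule additive_subgroup.a_closed[OF additive_subgroup_axioms])

lemma diff_mem: "x \<in> I \<Longrightarrow> y \<in> I \<Longrightarrow> x \<ominus> y \<in> I"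
  unfolding a_minus_def
  by (simp add: add_mem additive_subgroup.a_inv_closed[OF additive_subgroup_axioms])

lemma pow_mem:
  assumes "a \<in> I" and "(n::nat) \<ge> 1"
  shows "a [^] n \<in> I"
proof -
  obtain k where n: "n = Suc k" using assms(2) by (cases n) auto
  have "a [^] k \<otimes> a \<in> I" using I_l_closed[OF assms(1)] Icarr[OF assms(1)] by simp
  then show ?thesis using n by simp
qed

end

context primeideal
begin

lemma one_not_mem: "\<one> \<notin> I"
  using one_imp_carrier I_notcarr by blast

lemma mem_of_pow_mem:
  assumes a: "a \<in> carrier R" and "a [^] (n::nat) \<in> I"
  shows "a \<in> I"
  using assms(2)
proof (induction n)
  case 0
  then show ?case using one_not_mem by simp
next
  case (Suc n)
  then have "a [^] n \<otimes> a \<in> I" by simp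
  then have "a [^] n \<in> I \<or> a \<in> I" using I_prime a by simp
  then show ?case using Suc.IH by blast
qed

end

lemma (in cring) mem_add_PIdl_iff:
  "z \<in> M <+>\<^bsub>R\<^esub> PIdl a \<longleftrightarrow> (\<exists>m\<in>M. \<exists>x\<in>carrier R. z = m \<oplus> x \<otimes> a)"
  unfolding set_add_def' cgenideal_def by auto

lemma (in cring) ideal_add_PIdl:
  assumes M: "ideal M R" and a: "a \<in> carrier R"
  shows "ideal (M <+>\<^bsub>R\<^esub> PIdl a) R" and "M \<subseteq> M <+>\<^bsub>R\<^esub> PIdl a"
    and "a \<in> M <+>\<^bsub>R\<^esub> PIdl a"
proof -
  show "ideal (M <+>\<^bsub>R\<^esub> PIdl a) R" using add_ideals[OF M cgenideal_ideal[OF a]] .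
  show "M \<subseteq> M <+>\<^bsub>R\<^esub> PIdl a"
  proof
    fix m assume m: "m \<in> M"
    then have "m = m \<oplus> \<zero> \<otimes> a" using ideal.Icarr[OF M] a by simp
    then show "m \<in> M <+>\<^bsub>R\<^esub> PIdl a" unfolding mem_add_PIdl_iff using m by blast
  qed
  have "a = \<zero> \<oplus> \<one> \<otimes> a" using a by simp
  moreover have "\<zero> \<in> M" using additive_subgroup.zero_closed[OF ideal.axioms(1)[OF M]] .
  ultimately show "a \<in> M <+>\<^bsub>R\<^esub> PIdl a" unfolding mem_add_PIdl_iff by blast
qed

lemma (in cring) maximal_avoiding_ideal_is_prime:
  assumes M: "ideal M R" "M \<inter> S = {}"
    and one: "\<one> \<in> S" and mult: "\<And>x y. x \<in> S \<Longrightarrow> y \<in> S \<Longrightarrow> x \<otimes> y \<in> S"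
    and maximal: "\<And>J. ideal J R \<Longrightarrow> M \<subseteq> J \<Longrightarrow> J \<inter> S = {} \<Longrightarrow> J = M"
  shows "primeideal M R"
proof -
  interpret M: ideal M R by fact
  have meets: "\<exists>m\<in>M. \<exists>x\<in>carrier R. m \<oplus> x \<otimes> a \<in> S" if a: "a \<in> carrier R" "a \<notin> M" for a
  proof -
    have "M <+>\<^bsub>R\<^esub> PIdl a \<noteq> M" using ideal_add_PIdl(3)[OF M(1) a(1)] a(2) by blast
    then obtain z where z: "z \<in> M <+>\<^bsub>R\<^esub> PIdl a" "z \<in> S"
      using maximal ideal_add_PIdl(1,2)[OF M(1) a(1)] by blast
    then obtain m x where "m \<in> M" "x \<in> carrier R" "z = m \<oplus> x \<otimes> a"
      unfolding mem_add_PIdl_iff by blast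
    then show ?thesis using z(2) by blast
  qed
  show ?thesis
  proof (rule primeidealI[OF M(1) is_cring])
    show "carrier R \<noteq> M" using one M(2) by blast
  next
    fix a b assume ab: "a \<in> carrier R" "b \<in> carrier R" "a \<otimes> b \<in> M"
    show "a \<in> M \<or> b \<in> M"
    proof (rule ccontr)
      assume "\<not> (a \<in> M \<or> b \<in> M)"
      then obtain m1 x m2 y where m1: "m1 \<in> M" "x \<in> carrier R" "m1 \<oplus> x \<otimes> a \<in> S"
        and m2: "m2 \<in> M" "y \<in> carrier R" "m2 \<oplus> y \<otimes> b \<in> S"
        using meets ab by meson
      have c: "m1 \<in> carrier R" "m2 \<in> carrier R" using m1 m2 M.Icarr by auto
      have "(m1 \<oplus> x \<otimes> a) \<otimes> (m2 \<oplus> y \<otimes> b) =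
          m1 \<otimes> (m2 \<oplus> y \<otimes> b) \<oplus> (x \<otimes> a \<otimes> m2 \<oplus> (x \<otimes> y) \<otimes> (a \<otimes> b))"
        using c ab m1 m2 by algebra
      also have "\<dots> \<in> M"
        using M.I_r_closed[OF m1(1)] M.I_l_closed[OF m2(1)] M.I_l_closed[OF ab(3)] c ab m1 m2
        by (simp add: M.add_mem)
      finally show False using mult[OF m1(3) m2(3)] M(2) by blast
    qed
  qed
qed

lemma (in cring) exists_prime_avoiding:
  assumes I: "ideal I R" "I \<inter> S = {}"
    and one: "\<one> \<in> S" and mult: "\<And>x y. x \<in> S \<Longrightarrow> y \<in> S \<Longrightarrow> x \<otimes> y \<in> S"
  shows "\<exists>P. primeideal P R \<and> I \<subseteq> P \<and> P \<inter> S = {}"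
proof -
  define A where "A = {J. ideal J R \<and> I \<subseteq> J \<and> J \<inter> S = {}}"
  have "\<exists>M\<in>A. \<forall>J\<in>A. M \<subseteq> J \<longrightarrow> J = M"
  proof (rule subset_Zorn_nonempty)
    have "I \<in> A" using I unfolding A_def by simp
    then show "A \<noteq> {}" by blast
  next
    fix C assume C: "C \<noteq> {}" "subset.chain A C"
    then have CA: "C \<subseteq> A" unfolding subset_chain_def by simp
    have "subset.chain {J. ideal J R} C"
      using C(2) CA unfolding subset_chain_def A_def by blast
    then have "ideal (if C = {} then {\<zero>} else \<Union>C) R" by (rule chain_Union_is_ideal)
    then have "ideal (\<Union>C) R" using C(1) by simp
    moreover obtain J0 where "J0 \<in> C" using C(1) by blast
    then have "I \<subseteq> \<Union>C" using CA unfolding A_def by blast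
    moreover have "\<Union>C \<inter> S = {}" using CA unfolding A_def by blast
    ultimately show "\<Union>C \<in> A" unfolding A_def by simp
  qed
  then obtain M where MA: "M \<in> A" and max: "\<And>J. J \<in> A \<Longrightarrow> M \<subseteq> J \<Longrightarrow> J = M" by blast
  have M: "ideal M R" "I \<subseteq> M" "M \<inter> S = {}" using MA unfolding A_def by auto
  have "primeideal M R"
  proof (rule maximal_avoiding_ideal_is_prime[OF M(1,3) one mult])
    fix J assume "ideal J R" "M \<subseteq> J" "J \<inter> S = {}"
    moreover from this have "J \<in> A" using M(2) unfolding A_def by blast
    ultimately show "J = M" using max by blast
  qed
  then show ?thesis using M by blast
qed

lemma (in cring) full_if_in_no_prime:
  assumes u: "u \<in> carrier R" and no_prime: "\<And>P. primeideal P R \<Longrightarrow> u \<notin> P"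
  shows "full_elem R u"
proof -
  have I: "ideal (Idl {u}) R" using genideal_ideal u by simp
  have "Idl {u} = carrier R"
  proof (rule ccontr)
    assume "Idl {u} \<noteq> carrier R"
    then have "Idl {u} \<inter> {\<one>} = {}" using ideal.one_imp_carrier[OF I] by blast
    then obtain P where "primeideal P R" "Idl {u} \<subseteq> P"
      using exists_prime_avoiding[OF I, of "{\<one>}"] by auto
    then show False using no_prime genideal_self u by blast
  qed
  then show ?thesis unfolding full_elem_def using u by blast
qed

lemma (in ring) zero_in_jacobson_radical: "\<zero> \<in> jacobson_radical R"
  unfolding jacobson_radical_def
  using additive_subgroup.zero_closed[OF ideal.axioms(1)[OF maximalideal.axioms(1)]] by blast

lemma (in cring) pi_regular_imp_prime_maximal:
  assumes pr: "pi_regular R" and P: "primeideal P R"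
  shows "maximalideal P R"
proof -
  interpret P: primeideal P R by fact
  show ?thesis
  proof (rule maximalidealI[OF P.is_ideal P.I_notcarr])
    fix J assume J: "ideal J R" "P \<subseteq> J" "J \<subseteq> carrier R"
    interpret J: ideal J R by fact
    show "J = P \<or> J = carrier R"
    proof (cases "J = P")
      case False
      then obtain a where aJ: "a \<in> J" and aP: "a \<notin> P" using J(2) by blast
      have a: "a \<in> carrier R" using J(3) aJ by blast
      obtain n :: nat and r where n: "n \<ge> 1" and r: "r \<in> carrier R"
        and eq: "a [^] n = a [^] n \<otimes> r \<otimes> a [^] n"
        using pr a unfolding pi_regular_def by blast
      define t where "t = a [^] n"
      have t: "t \<in> carrier R" unfolding t_def using a by simp
      have "t \<otimes> (\<one> \<ominus> r \<otimes> t) = t \<ominus> t \<otimes> r \<otimes> t" using t r by algebra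
      also have "\<dots> = \<zero>" using eq t unfolding t_def[symmetric] by simp
      finally have "t \<otimes> (\<one> \<ominus> r \<otimes> t) \<in> P"
        using additive_subgroup.zero_closed[OF P.additive_subgroup_axioms] by simp
      then have "t \<in> P \<or> \<one> \<ominus> r \<otimes> t \<in> P" using P.I_prime t r by simp
      moreover have "t \<notin> P" using P.mem_of_pow_mem[OF a] aP unfolding t_def by blast
      ultimately have "\<one> \<ominus> r \<otimes> t \<in> J" using J(2) by blast
      moreover have "r \<otimes> t \<in> J" using J.I_l_closed[OF J.pow_mem[OF aJ n] r] unfolding t_def .
      ultimately have "(\<one> \<ominus> r \<otimes> t) \<oplus> r \<otimes> t \<in> J" by (rule J.add_mem)
      moreover have "(\<one> \<ominus> r \<otimes> t) \<oplus> r \<otimes> t = \<one>" using t r by algebra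
      ultimately show ?thesis using J.one_imp_carrier by simp
    qed simp
  qed
qed

text \<open>In a pi-regular commutative ring every element is feckly clean: a = e + u with
  e = 1 - a^n r idempotent (so e R (1 - e) = 0) and u = a - e in no prime ideal.\<close>
lemma (in cring) pi_regular_imp_feckly_clean_elem:
  assumes pr: "pi_regular R" and a: "a \<in> carrier R"
  shows "feckly_clean_elem R a"
proof -
  obtain n :: nat and r where n: "n \<ge> 1" and r: "r \<in> carrier R"
    and eq: "a [^] n = a [^] n \<otimes> r \<otimes> a [^] n"
    using pr a unfolding pi_regular_def by blast
  define t where "t = a [^] n"
  define f where "f = t \<otimes> r"
  define e where "e = \<one> \<ominus> f"
  define u where "u = a \<ominus> e"
  have t: "t \<in> carrier R" and f: "f \<in> carrier R" and e: "e \<in> carrier R"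
    and u: "u \<in> carrier R"
    unfolding t_def f_def e_def u_def using a r by simp_all
  have ft: "f \<otimes> t = t" using eq unfolding f_def t_def by simp
  have ef: "e \<otimes> f = \<zero>"
  proof -
    have "e \<otimes> f = f \<ominus> (f \<otimes> t) \<otimes> r" unfolding e_def f_def using t r by algebra
    also have "\<dots> = f \<ominus> t \<otimes> r" using ft by simp
    also have "\<dots> = \<zero>" unfolding f_def using t r by algebra
    finally show ?thesis .
  qed
  have aeu: "a = e \<oplus> u" unfolding u_def using a e by algebra
  have ef1: "\<one> = e \<oplus> f" unfolding e_def using f by algebra
  have no_prime: "u \<notin> P" if "primeideal P R" for P
  proof
    assume uP: "u \<in> P"
    interpret P: primeideal P R by fact
    have "a \<in> P \<longleftrightarrow> t \<in> P"
      using P.mem_of_pow_mem[OF a] P.pow_mem[OF _ n] unfolding t_def by blast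
    also have "\<dots> \<longleftrightarrow> f \<in> P"
      using P.I_r_closed[of t r] P.I_r_closed[of f t] r t f ft unfolding f_def by auto
    finally have af: "a \<in> P \<longleftrightarrow> f \<in> P" .
    have "e = a \<ominus> u" unfolding u_def using a e by algebra
    then have ae: "a \<in> P \<longleftrightarrow> e \<in> P"
      using P.add_mem[of e u] P.diff_mem[of a u] aeu uP by auto
    have "e \<in> P \<or> f \<in> P"
      using P.I_prime[OF e f] ef additive_subgroup.zero_closed[OF P.additive_subgroup_axioms]
      by simp
    then have "e \<oplus> f \<in> P" using af ae P.add_mem by blast
    then show False using ef1 P.one_not_mem by simp
  qed
  have "e \<otimes> s \<otimes> (\<one> \<ominus> e) \<in> jacobson_radical R" if s: "s \<in> carrier R" for s
  proof -
    have "e \<otimes> s \<otimes> (\<one> \<ominus> e) = s \<otimes> (e \<otimes> f)" unfolding e_def using f s by algebra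
    then show ?thesis using ef s zero_in_jacobson_radical by simp
  qed
  then show ?thesis unfolding feckly_clean_elem_def
    using e u aeu full_if_in_no_prime[OF u no_prime] by blast
qed

lemma (in monoid) right_fixed_pow:
  assumes b: "b \<in> carrier G" and c: "c \<in> carrier G" and fixed: "b \<otimes> c = b"
  shows "b \<otimes> c [^] (k::nat) = b"
proof (induction k)
  case 0
  then show ?case using b by simp
next
  case (Suc k)
  have "b \<otimes> c [^] Suc k = (b \<otimes> c [^] k) \<otimes> c" using b c by (simp add: m_assoc)
  then show ?case using Suc.IH fixed by simp
qed

lemma (in cring) pi_regular_witness_of_annihilator:
  assumes a: "a \<in> carrier R" and x: "x \<in> carrier R"
    and ann: "a [^] n \<otimes> (\<one> \<ominus> a \<otimes> x) = \<zero>"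
  shows "a [^] Suc n = a [^] Suc n \<otimes> x [^] Suc n \<otimes> a [^] Suc n"
proof -
  define b where "b = a [^] Suc n"
  have an: "a [^] n \<in> carrier R" and b: "b \<in> carrier R" unfolding b_def using a by simp_all
  have "a [^] n \<otimes> (a \<otimes> x) = a [^] n \<ominus> a [^] n \<otimes> (\<one> \<ominus> a \<otimes> x)"
    using an a x by algebra
  then have "a [^] n \<otimes> (a \<otimes> x) = a [^] n" using ann an by (simp add: a_minus_def)
  then have fixed: "b \<otimes> (a \<otimes> x) = b" unfolding b_def using an a x by (simp add: m_ac)
  have "b \<otimes> (a \<otimes> x) [^] Suc n = b"
    by (rule right_fixed_pow[OF b _ fixed]) (use a x in simp)
  moreover have "(a \<otimes> x) [^] Suc n = x [^] Suc n \<otimes> b"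
    unfolding b_def using a x by (simp add: nat_pow_distrib m_ac)
  ultimately show ?thesis using b a x unfolding b_def by (simp add: m_assoc)
qed

lemma (in cring) maximal_ideal_inverse_mod:
  assumes M: "maximalideal M R" and a: "a \<in> carrier R" "a \<notin> M"
  shows "\<exists>x\<in>carrier R. \<one> \<ominus> a \<otimes> x \<in> M"
proof -
  interpret M: maximalideal M R by fact
  note J = ideal_add_PIdl[OF M.is_ideal a(1)]
  have "M <+>\<^bsub>R\<^esub> PIdl a \<subseteq> carrier R" using ideal.Icarr[OF J(1)] by blast
  then have "M <+>\<^bsub>R\<^esub> PIdl a = M \<or> M <+>\<^bsub>R\<^esub> PIdl a = carrier R"
    using M.I_maximal[OF J(1,2)] by blast
  then have "\<one> \<in> M <+>\<^bsub>R\<^esub> PIdl a" using J(3) a(2) by auto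
  then obtain m x where m: "m \<in> M" "x \<in> carrier R" "\<one> = m \<oplus> x \<otimes> a"
    unfolding mem_add_PIdl_iff by (elim bexE) (rule that)
  have "m = \<one> \<ominus> a \<otimes> x" using m M.Icarr[OF m(1)] a by algebra
  then show ?thesis using m by blast
qed

lemma (in cring) pow_one_minus_mult:
  assumes a: "a \<in> carrier R" and v: "v \<in> carrier R" and w: "w \<in> carrier R"
  shows "(a [^] (n::nat) \<otimes> (\<one> \<ominus> a \<otimes> v)) \<otimes> (a [^] (m::nat) \<otimes> (\<one> \<ominus> a \<otimes> w)) =
    a [^] (n + m) \<otimes> (\<one> \<ominus> a \<otimes> (v \<oplus> w \<ominus> a \<otimes> v \<otimes> w))"
proof -
  have an: "a [^] n \<in> carrier R" and am: "a [^] m \<in> carrier R" using a by simp_all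
  have "(a [^] n \<otimes> (\<one> \<ominus> a \<otimes> v)) \<otimes> (a [^] m \<otimes> (\<one> \<ominus> a \<otimes> w)) =
      (a [^] n \<otimes> a [^] m) \<otimes> (\<one> \<ominus> a \<otimes> (v \<oplus> w \<ominus> a \<otimes> v \<otimes> w))"
    using an am a v w by algebra
  then show ?thesis using nat_pow_mult[OF a] by simp
qed

lemma (in cring) prime_maximal_imp_pi_regular:
  assumes dim0: "\<And>P. primeideal P R \<Longrightarrow> maximalideal P R"
  shows "pi_regular R"
  unfolding pi_regular_def
proof
  fix a assume a: "a \<in> carrier R"
  define S where "S = {a [^] (n::nat) \<otimes> (\<one> \<ominus> a \<otimes> x) | n x. x \<in> carrier R}"
  have one_minus_in_S: "\<one> \<ominus> a \<otimes> x \<in> S" if "x \<in> carrier R" for x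
  proof -
    have "\<one> \<ominus> a \<otimes> x = a [^] (0::nat) \<otimes> (\<one> \<ominus> a \<otimes> x)" using that a by simp
    then show ?thesis unfolding S_def using that by blast
  qed
  have zero_in_S: "\<zero> \<in> S"
  proof (rule ccontr)
    assume "\<zero> \<notin> S"
    then have disjoint: "{\<zero>} \<inter> S = {}" by blast
    have one: "\<one> \<in> S" using one_minus_in_S[of \<zero>] a by (simp add: a_minus_def)
    have mult: "y \<otimes> z \<in> S" if y: "y \<in> S" and z: "z \<in> S" for y z
    proof -
      obtain n :: nat and v where v: "v \<in> carrier R" "y = a [^] n \<otimes> (\<one> \<ominus> a \<otimes> v)"
        using y unfolding S_def by blast
      obtain m :: nat and w where w: "w \<in> carrier R" "z = a [^] m \<otimes> (\<one> \<ominus> a \<otimes> w)"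
        using z unfolding S_def by blast
      have "y \<otimes> z = a [^] (n + m) \<otimes> (\<one> \<ominus> a \<otimes> (v \<oplus> w \<ominus> a \<otimes> v \<otimes> w))"
        unfolding v(2) w(2) using pow_one_minus_mult[OF a v(1) w(1)] .
      moreover have "v \<oplus> w \<ominus> a \<otimes> v \<otimes> w \<in> carrier R" using a v(1) w(1) by simp
      ultimately show ?thesis unfolding S_def mem_Collect_eq by (intro exI conjI)
    qed
    obtain P where P: "primeideal P R" "P \<inter> S = {}"
      using exists_prime_avoiding[OF zeroideal disjoint one mult] by blast
    have "a = a [^] (1::nat) \<otimes> (\<one> \<ominus> a \<otimes> \<zero>)" using a by (simp add: a_minus_def)
    then have "a \<in> S" unfolding S_def by blast
    then have "a \<notin> P" using P(2) by blast
    then obtain x where "x \<in> carrier R" "\<one> \<ominus> a \<otimes> x \<in> P"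
      using maximal_ideal_inverse_mod[OF dim0[OF P(1)] a] by blast
    then show False using one_minus_in_S P(2) by blast
  qed
  then obtain n :: nat and x where x: "x \<in> carrier R"
    and ann: "\<zero> = a [^] n \<otimes> (\<one> \<ominus> a \<otimes> x)"
    unfolding S_def mem_Collect_eq by (elim exE conjE) (rule that)
  have "a [^] Suc n = a [^] Suc n \<otimes> x [^] Suc n \<otimes> a [^] Suc n"
    using pi_regular_witness_of_annihilator[OF a x ann[symmetric]] .
  then show "\<exists>n::nat. n \<ge> 1 \<and> (\<exists>r\<in>carrier R. a [^] n = a [^] n \<otimes> r \<otimes> a [^] n)"
    using x by (intro exI[of _ "Suc n"]) auto
qed

theorem corollary5p8:
  fixes R :: "('a, 'b) ring_scheme"
  assumes "cring R"
  shows "pi_regular R \<longleftrightarrow> feckly_clean R \<and> (\<forall>P. primeideal P R \<longrightarrow> maximalideal P R)"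
proof -
  interpret cring R by fact
  show ?thesis
  proof
    assume pr: "pi_regular R"
    show "feckly_clean R \<and> (\<forall>P. primeideal P R \<longrightarrow> maximalideal P R)"
      unfolding feckly_clean_def
      using pi_regular_imp_feckly_clean_elem[OF pr] pi_regular_imp_prime_maximal[OF pr] by blast
  next
    assume "feckly_clean R \<and> (\<forall>P. primeideal P R \<longrightarrow> maximalideal P R)"
    then show "pi_regular R" using prime_maximal_imp_pi_regular by blast
  qed
qed

end
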